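(* Let $f:\mathbb{R}^d\to\mathbb{R}$ be continuously differentiable, and let $\tilde F_{\ell_1}$ be as defined in the context. Then for every $x\in\mathbb{R}^d$, \[ \mathcal F[\tilde F_{\ell_1}](x)\ \subseteq\ \overline{\operatorname{conv}}\Bigl\{-\,s\,e^{(i)}:\ i\in\mathcal I(x),\ s\in\operatorname{Sign}(\partial_i f(x))\Bigr\}. \]
   Context: $e^{(i)}$ is the $i$-th standard basis vector of $\mathbb{R}^d$; $\operatorname{sign}(u)\in\{-1,0,1\}$ with $\operatorname{sign}(0)=0$; $\operatorname{Sign}(u)=\{1\}$ if $u>0$, $[-1,1]$ if $u=0$, $\{-1\}$ if $u<0$. $\mathcal I(x):=\{i:\ |\partial_i f(x)|=\max_{1\le j\le d}|\partial_j f(x)|\}$. $\tilde F_{\ell_1}:\mathbb{R}^d\to\mathbb{R}^d$ is any function with $\tilde F_{\ell_1}(y)\in\{-\operatorname{sign}(\partial_i f(y))\,e^{(i)}:\ i\in\mathcal I(y)\}$ for all $y$. For $F:\mathbb{R}^d\to\mathbb{R}^d$, the Filippov set is $\mathcal F[F](x):=\bigcap_{\delta>0}\overline{\operatorname{conv}}\{F(y):\ \|y-x\|<\delta\}$. *)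

theory Defs
  imports "HOL-Analysis.Analysis"
begin

definition partial_deriv :: "(real^'n \<Rightarrow> real) \<Rightarrow> 'n \<Rightarrow> real^'n \<Rightarrow> real" where
  "partial_deriv f i x = frechet_derivative f (at x) (axis i 1)"

definition C1 :: "(real^'n \<Rightarrow> real) \<Rightarrow> bool" where
  "C1 f \<longleftrightarrow> (\<forall>x. f differentiable (at x)) \<and> (\<forall>i. continuous_on UNIV (partial_deriv f i))"

definition Sign :: "real \<Rightarrow> real set" where
  "Sign u = (if u > 0 then {1} else if u < 0 then {-1} else {-1..1})"

definition maxidx :: "(real^'n \<Rightarrow> real) \<Rightarrow> real^'n \<Rightarrow> 'n set" where
  "maxidx f x = {i. \<forall>j. \<bar>partial_deriv f j x\<bar> \<le> \<bar>partial_deriv f i x\<bar>}"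

definition filippov :: "(real^'n \<Rightarrow> real^'n) \<Rightarrow> real^'n \<Rightarrow> (real^'n) set" where
  "filippov F x = (\<Inter>\<delta>\<in>{0<..}. closure (convex hull (F ` ball x \<delta>)))"

definition is_Fl1 :: "(real^'n \<Rightarrow> real) \<Rightarrow> (real^'n \<Rightarrow> real^'n) \<Rightarrow> bool" where
  "is_Fl1 f F \<longleftrightarrow> (\<forall>y. F y \<in> {- (sgn (partial_deriv f i y)) *\<^sub>R axis i 1 | i. i \<in> maxidx f y})"

end

theory Submission
  imports Defs
begin

text \<open>The Filippov set only sees the values of \<open>F\<close> near \<open>x\<close>. By continuity of the partial
  derivatives, near \<open>x\<close> every index maximising \<open>\<bar>\<partial>\<^sub>i f\<bar>\<close> already maximises it at \<open>x\<close>
  (a strict inequality \<open>\<bar>\<partial>\<^sub>i f x\<bar> < \<bar>\<partial>\<^sub>j f x\<bar>\<close> persists), and \<open>sgn (\<partial>\<^sub>i f y) \<in> Sign (\<partial>\<^sub>i f x)\<close>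
  (a strict sign persists, and \<open>Sign 0 = {-1..1}\<close>). Hence \<open>F\<close> maps a ball around \<open>x\<close> into
  the generating set on the right-hand side.\<close>

lemma filippov_subset_if_eventually_in:
  fixes F :: "real^'n \<Rightarrow> real^'n"
  assumes "eventually (\<lambda>y. F y \<in> S) (nhds x)"
  shows "filippov F x \<subseteq> closure (convex hull S)"
proof -
  obtain d where "d > 0" and d: "\<And>y. dist y x < d \<Longrightarrow> F y \<in> S"
    using assms unfolding eventually_nhds_metric by blast
  have "F ` ball x d \<subseteq> S"
    using d by (auto simp: dist_commute)
  hence "closure (convex hull (F ` ball x d)) \<subseteq> closure (convex hull S)"
    by (intro closure_mono hull_mono)
  moreover have "filippov F x \<subseteq> closure (convex hull (F ` ball x d))"
    unfolding filippov_def using \<open>d > 0\<close> by blast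
  ultimately show ?thesis
    by blast
qed

lemma eventually_sgn_in_Sign:
  fixes g :: "'a::t2_space \<Rightarrow> real"
  assumes "isCont g x"
  shows "eventually (\<lambda>y. sgn (g y) \<in> Sign (g x)) (nhds x)"
proof -
  have g: "(g \<longlongrightarrow> g x) (nhds x)"
    using assms by (simp add: isCont_def tendsto_at_iff_tendsto_nhds)
  consider "g x > 0" | "g x < 0" | "g x = 0"
    by linarith
  thus ?thesis
  proof cases
    case 1
    from order_tendstoD(1)[OF g 1] show ?thesis
      by eventually_elim (use 1 in \<open>simp add: Sign_def\<close>)
  next
    case 2
    from order_tendstoD(2)[OF g 2] show ?thesis
      by eventually_elim (use 2 in \<open>simp add: Sign_def\<close>)
  next
    case 3
    thus ?thesis
      by (simp add: Sign_def sgn_real_def)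
  qed
qed

lemma eventually_maxidx_subset:
  fixes f :: "real^'n \<Rightarrow> real"
  assumes cont: "\<And>i. isCont (partial_deriv f i) x"
  shows "eventually (\<lambda>y. maxidx f y \<subseteq> maxidx f x) (nhds x)"
proof -
  have "eventually (\<lambda>y. i \<in> maxidx f y \<longrightarrow> i \<in> maxidx f x) (nhds x)" for i
  proof (cases "i \<in> maxidx f x")
    case False
    then obtain j where j: "\<bar>partial_deriv f i x\<bar> < \<bar>partial_deriv f j x\<bar>"
      unfolding maxidx_def by (auto simp: not_le)
    have "((\<lambda>y. \<bar>partial_deriv f j y\<bar> - \<bar>partial_deriv f i y\<bar>) \<longlongrightarrow>
            \<bar>partial_deriv f j x\<bar> - \<bar>partial_deriv f i x\<bar>) (nhds x)"
      using cont by (intro tendsto_intros) (simp_all add: isCont_def tendsto_at_iff_tendsto_nhds)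
    hence "eventually (\<lambda>y. \<bar>partial_deriv f j y\<bar> - \<bar>partial_deriv f i y\<bar> > 0) (nhds x)"
      by (rule order_tendstoD(1)) (use j in simp)
    thus ?thesis
      by eventually_elim (auto simp: maxidx_def not_le dest: spec[of _ j])
  qed simp
  thus ?thesis
    by (simp add: subset_iff eventually_all_finite)
qed

lemma C1_isCont_partial_deriv: "C1 f \<Longrightarrow> isCont (partial_deriv f i) x"
  by (simp add: C1_def continuous_on_eq_continuous_at)

theorem lemma4p1:
  fixes f :: "real^'n \<Rightarrow> real" and F :: "real^'n \<Rightarrow> real^'n"
  assumes "C1 f" and "is_Fl1 f F"
  shows "filippov F x \<subseteq>
    closure (convex hull {- s *\<^sub>R axis i 1 | i s. i \<in> maxidx f x \<and> s \<in> Sign (partial_deriv f i x)})"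
proof (rule filippov_subset_if_eventually_in)
  have "eventually (\<lambda>y. maxidx f y \<subseteq> maxidx f x \<and>
      (\<forall>i. sgn (partial_deriv f i y) \<in> Sign (partial_deriv f i x))) (nhds x)"
    using assms(1)
    by (intro eventually_conj eventually_maxidx_subset eventually_all_finite allI
        eventually_sgn_in_Sign C1_isCont_partial_deriv)
  thus "eventually (\<lambda>y. F y \<in> {- s *\<^sub>R axis i 1 | i s. i \<in> maxidx f x \<and>
      s \<in> Sign (partial_deriv f i x)}) (nhds x)"
  proof eventually_elim
    case (elim y)
    obtain i where "i \<in> maxidx f y" and "F y = - sgn (partial_deriv f i y) *\<^sub>R axis i 1"
      using assms(2) unfolding is_Fl1_def by blast
    with elim show ?case
      by blast
  qed
qed

end
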